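(* Let $\Gamma=(V,E)$ be a finite graph, $\{G_v\}_{v\in V}$ a collection of non-trivial finitely generated abelian groups, and $G=W(\Gamma,\{G_v\}_{v\in V})$ their graph product. Assume that every vertex $v$ with $st(v)=V$ has finite vertex group $G_v$. Then $[\mathrm{Aut}(G),G]$ is a subgroup of finite index in $G$. Moreover, if no vertex $v\in V$ satisfies $st(v)=V$ and every vertex group $G_v$ is finite of odd order (i.e. no element of any vertex group has infinite order or order a power of $2$ other than $1$), then $[\mathrm{Aut}(G),G]=G$.
   Context: Graph: $\Gamma=(V,E)$, $V$ non-empty finite, $E$ a set of 2-element subsets; $lk(v)=\{x:\{v,x\}\in E\}$, $st(v)=lk(v)\cup\{v\}$. Graph product: $(\ast_{v}G_v)/N$ with $N$ normally generated by $[G_x,G_y]$, $\{x,y\}\in E$. $[\mathrm{Aut}(G),G]$ denotes the subgroup of $G$ generated by all elements $\varphi(g)g^{-1}$ with $\varphi\in\mathrm{Aut}(G)$, $g\in G$ (this corresponds to the commutators $[\varphi,c_g]=c_{\varphi(g)g^{-1}}$ in $\mathrm{Aut}(G)$, where $c_g$ is conjugation by $g$). *)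

theory Defs
  imports "HOL-Algebra.Algebra"
begin

definition simple_graph :: "'v set \<Rightarrow> 'v set set \<Rightarrow> bool" where
  "simple_graph V E \<longleftrightarrow> finite V \<and> V \<noteq> {} \<and>
     (\<forall>e\<in>E. \<exists>x y. e = {x, y} \<and> x \<noteq> y \<and> x \<in> V \<and> y \<in> V)"

definition lk :: "'v set set \<Rightarrow> 'v \<Rightarrow> 'v set" where
  "lk E v = {x. {v, x} \<in> E}"

definition st :: "'v set set \<Rightarrow> 'v \<Rightarrow> 'v set" where
  "st E v = lk E v \<union> {v}"

definition gp_words :: "'v set \<Rightarrow> ('v \<Rightarrow> 'g monoid) \<Rightarrow> ('v \<times> 'g) list set" where
  "gp_words V G = {w. \<forall>(v, g) \<in> set w. v \<in> V \<and> g \<in> carrier (G v)}"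

text \<open>Elementary moves: delete an identity letter (free product), merge two adjacent
  letters of the same vertex group (free product), swap adjacent letters from adjacent
  vertices (the relations [G_x, G_y] = 1 for {x,y} in E).\<close>

inductive_set gp_step :: "'v set \<Rightarrow> 'v set set \<Rightarrow> ('v \<Rightarrow> 'g monoid)
    \<Rightarrow> (('v \<times> 'g) list \<times> ('v \<times> 'g) list) set"
  for V E G where
  del_one: "\<lbrakk>xs \<in> gp_words V G; ys \<in> gp_words V G; v \<in> V\<rbrakk> \<Longrightarrow>
     (xs @ [(v, \<one>\<^bsub>G v\<^esub>)] @ ys, xs @ ys) \<in> gp_step V E G"
| merge: "\<lbrakk>xs \<in> gp_words V G; ys \<in> gp_words V G; v \<in> V;
     a \<in> carrier (G v); b \<in> carrier (G v)\<rbrakk> \<Longrightarrow>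
     (xs @ [(v, a), (v, b)] @ ys, xs @ [(v, a \<otimes>\<^bsub>G v\<^esub> b)] @ ys) \<in> gp_step V E G"
| swap: "\<lbrakk>xs \<in> gp_words V G; ys \<in> gp_words V G; {u, w} \<in> E; u \<in> V; w \<in> V;
     a \<in> carrier (G u); b \<in> carrier (G w)\<rbrakk> \<Longrightarrow>
     (xs @ [(u, a), (w, b)] @ ys, xs @ [(w, b), (u, a)] @ ys) \<in> gp_step V E G"

definition gp_eqv :: "'v set \<Rightarrow> 'v set set \<Rightarrow> ('v \<Rightarrow> 'g monoid)
    \<Rightarrow> (('v \<times> 'g) list \<times> ('v \<times> 'g) list) set" where
  "gp_eqv V E G = (gp_step V E G \<union> (gp_step V E G)\<inverse>)\<^sup>* \<inter> (gp_words V G \<times> gp_words V G)"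

definition graph_product :: "'v set \<Rightarrow> 'v set set \<Rightarrow> ('v \<Rightarrow> 'g monoid)
    \<Rightarrow> ('v \<times> 'g) list set monoid" where
  "graph_product V E G =
     \<lparr> carrier = (gp_words V G // gp_eqv V E G),
       monoid.mult = (\<lambda>A B. ( gp_eqv V E G `` {(SOME a. a \<in> A) @ (SOME b. b \<in> B)})),
       one = (gp_eqv V E G `` {[]}) \<rparr>"

definition aut_comm :: "('a, 'b) monoid_scheme \<Rightarrow> 'a set" where
  "aut_comm H = generate H
     {\<phi> g \<otimes>\<^bsub>H\<^esub> inv\<^bsub>H\<^esub> g | \<phi> g. \<phi> \<in> iso H H \<and> g \<in> carrier H}"

definition fin_gen_group :: "('a, 'b) monoid_scheme \<Rightarrow> bool" where
  "fin_gen_group H \<longleftrightarrow> (\<exists>S. finite S \<and> S \<subseteq> carrier H \<and> generate H S = carrier H)"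

end

theory Submission
  imports Defs
begin

(* Since G_v is abelian, inverting the letters of one vertex group respects all defining
   relations of the graph product, so it is an automorphism; it sends the class of g^-1 to
   that of g, whence g^2 lies in [Aut(G), G] for every g in every G_v. Inner automorphisms put
   all commutators into [Aut(G), G], so the quotient is abelian, generated by the images of
   finitely many vertex-group generators, each of order at most 2, and therefore finite.
   If every G_v has odd order, each of its elements is a square, so [Aut(G), G] contains every
   vertex group and hence all of G. *)

lemma (in group) conjugation_iso:
  assumes x: "x \<in> carrier G"
  shows "(\<lambda>y. x \<otimes> y \<otimes> inv x) \<in> iso G G"
proof (rule isoI)
  show "(\<lambda>y. x \<otimes> y \<otimes> inv x) \<in> hom G G"
    by (rule homI) (simp_all add: x m_assoc flip: m_assoc[of "inv x" x])
  show "bij_betw (\<lambda>y. x \<otimes> y \<otimes> inv x) (carrier G) (carrier G)"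
    using conjugation_is_bij[OF x] by (simp add: bij_betw_def inj_on_def image_def)
qed

lemma aut_comm_incl:
  "\<phi> \<in> iso H H \<Longrightarrow> g \<in> carrier H \<Longrightarrow> \<phi> g \<otimes>\<^bsub>H\<^esub> inv\<^bsub>H\<^esub> g \<in> aut_comm H"
  unfolding aut_comm_def by (rule generate.incl) blast

lemma (in group) aut_comm_subgroup: "subgroup (aut_comm G) G"
  unfolding aut_comm_def
  by (rule generate_is_subgroup) (auto simp: iso_def hom_in_carrier)

lemma (in group) commutator_in_aut_comm:
  assumes "x \<in> carrier G" "y \<in> carrier G"
  shows "x \<otimes> y \<otimes> inv x \<otimes> inv y \<in> aut_comm G"
  using aut_comm_incl[OF conjugation_iso[OF assms(1)] assms(2)] by simp

lemma (in group) aut_comm_normal: "aut_comm G \<lhd> G"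
proof (rule normal_invI[OF aut_comm_subgroup])
  interpret H: subgroup "aut_comm G" G by (rule aut_comm_subgroup)
  fix x h assume x: "x \<in> carrier G" and h: "h \<in> aut_comm G"
  have "x \<otimes> h \<otimes> inv x = (x \<otimes> h \<otimes> inv x \<otimes> inv h) \<otimes> h"
    using x H.mem_carrier[OF h] by (simp add: m_assoc)
  then show "x \<otimes> h \<otimes> inv x \<in> aut_comm G"
    using H.m_closed[OF commutator_in_aut_comm[OF x H.mem_carrier[OF h]] h] by simp
qed

lemma (in normal) comm_group_Mod_of_commutators:
  assumes "\<And>a b. a \<in> carrier G \<Longrightarrow> b \<in> carrier G \<Longrightarrow> a \<otimes> b \<otimes> inv a \<otimes> inv b \<in> H"
  shows "comm_group (G Mod H)"
proof (rule group.group_comm_groupI[OF factorgroup_is_group])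
  fix A B assume "A \<in> carrier (G Mod H)" "B \<in> carrier (G Mod H)"
  then obtain a b where a: "a \<in> carrier G" "A = H #> a" and b: "b \<in> carrier G" "B = H #> b"
    unfolding FactGroup_def RCOSETS_def by auto
  have "a \<otimes> b \<otimes> inv (b \<otimes> a) = a \<otimes> b \<otimes> inv a \<otimes> inv b"
    using a b by (simp add: inv_mult_group m_assoc)
  then have "a \<otimes> b \<in> H #> (b \<otimes> a)"
    using rcos_module[OF is_group, of "b \<otimes> a" "a \<otimes> b"] assms a b by simp
  then have "H #> (b \<otimes> a) = H #> (a \<otimes> b)"
    using repr_independence[OF _ _ subgroup_axioms] a b by simp
  then show "A \<otimes>\<^bsub>G Mod H\<^esub> B = B \<otimes>\<^bsub>G Mod H\<^esub> A"
    using a b by (simp add: FactGroup_def rcos_sum)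
qed

lemma (in group) comm_group_Mod_aut_comm: "comm_group (G Mod aut_comm G)"
  by (rule normal.comm_group_Mod_of_commutators[OF aut_comm_normal commutator_in_aut_comm])

lemma (in comm_group) finprod_symdiff_of_involutions:
  assumes T: "finite T" "T \<subseteq> carrier G" and invol: "\<And>t. t \<in> T \<Longrightarrow> t \<otimes> t = \<one>"
    and U: "U \<subseteq> T" "U' \<subseteq> T"
  shows "finprod G (\<lambda>x. x) U \<otimes> finprod G (\<lambda>x. x) U' = finprod G (\<lambda>x. x) ((U - U') \<union> (U' - U))"
proof -
  let ?\<Pi> = "finprod G (\<lambda>x. x)" and ?I = "U \<inter> U'"
  have fin: "finite M" and Pi: "(\<lambda>x. x) \<in> M \<rightarrow> carrier G" if "M \<subseteq> T" for M
    using that T finite_subset by auto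
  have split: "?\<Pi> M = ?\<Pi> (M - N) \<otimes> ?\<Pi> ?I" if "M \<subseteq> T" "M \<inter> N = ?I" for M N
  proof -
    have "M = (M - N) \<union> ?I" using that by blast
    moreover have "?\<Pi> ((M - N) \<union> ?I) = ?\<Pi> (M - N) \<otimes> ?\<Pi> ?I"
      by (rule finprod_Un_disjoint) (use that U fin T in auto)
    ultimately show ?thesis by simp
  qed
  have "?\<Pi> ?I \<otimes> ?\<Pi> ?I = finprod G (\<lambda>x. x \<otimes> x) ?I"
    using finprod_multf[OF Pi Pi, of ?I] U by (simp add: le_infI1)
  also have "\<dots> = \<one>"
    by (rule finprod_one_eqI) (use invol U in auto)
  finally have sq: "?\<Pi> ?I \<otimes> ?\<Pi> ?I = \<one>" .
  have closed: "?\<Pi> (U - U') \<in> carrier G" "?\<Pi> (U' - U) \<in> carrier G" "?\<Pi> ?I \<in> carrier G"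
    using U by (auto intro!: finprod_closed Pi)
  have "?\<Pi> U \<otimes> ?\<Pi> U' = ?\<Pi> (U - U') \<otimes> ?\<Pi> ?I \<otimes> (?\<Pi> (U' - U) \<otimes> ?\<Pi> ?I)"
    using split[of U U'] split[of U' U] U by (simp add: inf_commute)
  also have "\<dots> = ?\<Pi> (U - U') \<otimes> ?\<Pi> (U' - U) \<otimes> (?\<Pi> ?I \<otimes> ?\<Pi> ?I)"
    using closed by (simp add: m_ac)
  also have "\<dots> = ?\<Pi> (U - U') \<otimes> ?\<Pi> (U' - U)"
    using closed sq by simp
  also have "\<dots> = ?\<Pi> ((U - U') \<union> (U' - U))"
    by (rule finprod_Un_disjoint[symmetric]) (use U T fin in auto)
  finally show ?thesis .
qed

lemma (in comm_group) finite_generate_involutions: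
  assumes T: "finite T" "T \<subseteq> carrier G" and invol: "\<And>t. t \<in> T \<Longrightarrow> t \<otimes> t = \<one>"
  shows "finite (generate G T)"
proof -
  have "generate G T \<subseteq> finprod G (\<lambda>x. x) ` Pow T"
  proof
    fix x assume "x \<in> generate G T"
    then show "x \<in> finprod G (\<lambda>x. x) ` Pow T"
    proof (induction rule: generate.induct)
      case one
      show ?case by (rule image_eqI[of _ _ "{}"]) auto
    next
      case (incl t)
      then show ?case using T by (intro image_eqI[of _ _ "{t}"]) auto
    next
      case (inv t)
      then have "inv t = t" using T invol by (intro inv_equality) auto
      then show ?case using inv T by (intro image_eqI[of _ _ "{t}"]) auto
    next
      case (eng x y)
      then obtain U U' where
        "U \<subseteq> T" "U' \<subseteq> T" "x = finprod G (\<lambda>x. x) U" "y = finprod G (\<lambda>x. x) U'"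
        by blast
      then show ?case
        using finprod_symdiff_of_involutions[OF T invol]
        by (intro image_eqI[of _ _ "(U - U') \<union> (U' - U)"]) auto
    qed
  qed
  then show ?thesis using T finite_subset by blast
qed

lemma (in normal) finite_rcosets_of_square_generators:
  assumes comm: "comm_group (G Mod H)"
    and T: "finite T" "T \<subseteq> carrier G" "generate G T = carrier G"
    and square: "\<And>t. t \<in> T \<Longrightarrow> t \<otimes> t \<in> H"
  shows "finite (rcosets H)"
proof -
  interpret Q: comm_group "G Mod H" by (rule comm)
  let ?\<pi> = "\<lambda>a. H #> a"
  have \<pi>: "group_hom G (G Mod H) ?\<pi>"
    by (simp add: group_hom_def group_hom_axioms_def is_group Q.is_group r_coset_hom_Mod)
  have "rcosets H = ?\<pi> ` carrier G"
    by (auto simp: RCOSETS_def)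
  also have "\<dots> = generate (G Mod H) (?\<pi> ` T)"
    using group_hom.generate_img[OF \<pi> T(2)] T(3) by simp
  finally have quotient_generated: "rcosets H = generate (G Mod H) (?\<pi> ` T)" .
  have "finite (generate (G Mod H) (?\<pi> ` T))"
  proof (rule Q.finite_generate_involutions)
    show "finite (?\<pi> ` T)" using T(1) by simp
    show "?\<pi> ` T \<subseteq> carrier (G Mod H)"
      using T(2) hom_in_carrier[OF r_coset_hom_Mod] by auto
    fix c assume "c \<in> ?\<pi> ` T"
    then obtain t where t: "t \<in> T" "c = ?\<pi> t" by blast
    then have "c \<otimes>\<^bsub>G Mod H\<^esub> c = ?\<pi> (t \<otimes> t)"
      using T(2) by (auto simp: hom_mult[OF r_coset_hom_Mod])
    also have "\<dots> = H"
      using rcos_const square[OF t(1)] by blast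
    finally show "c \<otimes>\<^bsub>G Mod H\<^esub> c = \<one>\<^bsub>G Mod H\<^esub>" by simp
  qed
  then show ?thesis using quotient_generated by simp
qed

lemma (in group) square_root_of_odd_order:
  assumes odd: "odd (order G)" and g: "g \<in> carrier G"
  shows "\<exists>h \<in> carrier G. h \<otimes> h = g"
proof -
  obtain k where k: "order G = 2 * k + 1" using odd oddE by blast
  have "g [^] Suc k \<otimes> g [^] Suc k = g [^] (Suc k + Suc k)"
    using g by (rule nat_pow_mult)
  also have "\<dots> = g [^] Suc (order G)"
    by (simp only: k) (simp add: mult_2)
  also have "\<dots> = g [^] order G \<otimes> g"
    by (rule nat_pow_Suc)
  also have "\<dots> = g" using g by (simp add: pow_order_eq_1)
  finally show ?thesis using g by blast
qed

definition map_letters :: "('v \<Rightarrow> 'g \<Rightarrow> 'g) \<Rightarrow> ('v \<times> 'g) list \<Rightarrow> ('v \<times> 'g) list" where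
  "map_letters f w = map (\<lambda>(u, g). (u, f u g)) w"

lemma map_letters_Nil [simp]: "map_letters f [] = []"
  and map_letters_Cons [simp]: "map_letters f ((u, g) # w) = (u, f u g) # map_letters f w"
  and map_letters_append [simp]: "map_letters f (x @ y) = map_letters f x @ map_letters f y"
  by (simp_all add: map_letters_def)

locale vertex_groups =
  fixes V :: "'v set" and E :: "'v set set" and G :: "'v \<Rightarrow> 'g monoid"
  assumes vertex_group: "\<And>v. v \<in> V \<Longrightarrow> group (G v)"
begin

abbreviation words :: "('v \<times> 'g) list set" where
  "words \<equiv> gp_words V G"

abbreviation moves :: "(('v \<times> 'g) list \<times> ('v \<times> 'g) list) set" where
  "moves \<equiv> gp_step V E G \<union> (gp_step V E G)\<inverse>"

abbreviation eqv :: "(('v \<times> 'g) list \<times> ('v \<times> 'g) list) set" where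
  "eqv \<equiv> gp_eqv V E G"

abbreviation GP :: "('v \<times> 'g) list set monoid" where
  "GP \<equiv> graph_product V E G"

abbreviation cls :: "('v \<times> 'g) list \<Rightarrow> ('v \<times> 'g) list set" where
  "cls w \<equiv> eqv `` {w}"

lemma words_Nil [simp]: "[] \<in> words"
  and words_Cons [simp]: "(v, g) # w \<in> words \<longleftrightarrow> v \<in> V \<and> g \<in> carrier (G v) \<and> w \<in> words"
  and words_append [simp]: "x @ y \<in> words \<longleftrightarrow> x \<in> words \<and> y \<in> words"
  by (auto simp: gp_words_def)

lemma gp_step_words: "(x, y) \<in> gp_step V E G \<Longrightarrow> x \<in> words \<and> y \<in> words"
  by (induction rule: gp_step.induct)
    (auto simp: monoid.m_closed monoid.one_closed group.is_monoid vertex_group)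

lemma gp_step_in_context:
  assumes "(x, y) \<in> gp_step V E G" "z \<in> words" "z' \<in> words"
  shows "(z @ x @ z', z @ y @ z') \<in> gp_step V E G"
  using assms
proof induction
  case (del_one xs ys v)
  then show ?case using gp_step.del_one[of "z @ xs" V G "ys @ z'" v E] by simp
next
  case (merge xs ys v a b)
  then show ?case using gp_step.merge[of "z @ xs" V G "ys @ z'" v a b E] by simp
next
  case (swap xs ys u w a b)
  then show ?case using gp_step.swap[of "z @ xs" V G "ys @ z'" u w E a b] by simp
qed

lemma moves_in_context:
  assumes "(x, y) \<in> moves\<^sup>*" "z \<in> words" "z' \<in> words"
  shows "(z @ x @ z', z @ y @ z') \<in> moves\<^sup>*"
  using assms(1)
proof (induction rule: rtrancl_induct)
  case (step y y')
  then have "(z @ y @ z', z @ y' @ z') \<in> moves"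
    using gp_step_in_context assms(2,3) by blast
  with step.IH show ?case by (rule rtrancl_into_rtrancl)
qed simp

lemma eqv_iff: "(x, y) \<in> eqv \<longleftrightarrow> (x, y) \<in> moves\<^sup>* \<and> x \<in> words \<and> y \<in> words"
  by (auto simp: gp_eqv_def)

lemma equiv_eqv: "equiv words eqv"
proof (rule equivI)
  show "refl_on words eqv" by (auto simp: refl_on_def eqv_iff)
  show "sym eqv" unfolding sym_def eqv_iff
    by (metis converse_Un converse_converse converse_iff rtrancl_converseI sup_commute)
  show "trans eqv" unfolding trans_def eqv_iff by (meson rtrancl_trans)
qed (auto simp: eqv_iff)

lemma gp_step_eqv: "(x, y) \<in> gp_step V E G \<Longrightarrow> (x, y) \<in> eqv"
  using gp_step_words by (auto simp: eqv_iff)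

lemma eqv_append: "(x, x') \<in> eqv \<Longrightarrow> (y, y') \<in> eqv \<Longrightarrow> (x @ y, x' @ y') \<in> eqv"
  unfolding eqv_iff
  using moves_in_context[of x x' "[]" y] moves_in_context[of y y' x' "[]"]
  by (auto intro: rtrancl_trans)

lemma eqv_merge:
  "v \<in> V \<Longrightarrow> a \<in> carrier (G v) \<Longrightarrow> b \<in> carrier (G v) \<Longrightarrow> ([(v, a), (v, b)], [(v, a \<otimes>\<^bsub>G v\<^esub> b)]) \<in> eqv"
  using gp_step_eqv gp_step.merge[of "[]" V G "[]" v a b E] by simp

lemma eqv_delete_one: "v \<in> V \<Longrightarrow> ([(v, \<one>\<^bsub>G v\<^esub>)], []) \<in> eqv"
  using gp_step_eqv gp_step.del_one[of "[]" V G "[]" v E] by simp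

lemma carrier_graph_product: "carrier GP = words // eqv"
  by (simp add: graph_product_def)

lemma one_graph_product: "\<one>\<^bsub>GP\<^esub> = cls []"
  by (simp add: graph_product_def)

lemma cls_in_carrier: "w \<in> words \<Longrightarrow> cls w \<in> carrier GP"
  by (simp add: carrier_graph_product quotientI)

lemma carrier_graph_productE:
  assumes "A \<in> carrier GP" obtains w where "w \<in> words" "A = cls w"
  using assms unfolding carrier_graph_product by (elim quotientE) blast

lemma some_in_cls: "w \<in> words \<Longrightarrow> ((SOME w'. w' \<in> cls w), w) \<in> eqv"
  using someI[of "\<lambda>w'. w' \<in> cls w" w] equiv_class_self[OF equiv_eqv] equiv_eqv
  by (metis Image_singleton_iff equivE symD)

lemma mult_cls: "x \<in> words \<Longrightarrow> y \<in> words \<Longrightarrow> cls x \<otimes>\<^bsub>GP\<^esub> cls y = cls (x @ y)"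
  using eqv_append[OF some_in_cls some_in_cls] equiv_class_eq[OF equiv_eqv]
  by (simp add: graph_product_def)

definition vertex_emb :: "'v \<Rightarrow> 'g \<Rightarrow> ('v \<times> 'g) list set" where
  "vertex_emb v g = cls [(v, g)]"

lemma cls_Cons:
  "v \<in> V \<Longrightarrow> g \<in> carrier (G v) \<Longrightarrow> w \<in> words \<Longrightarrow> cls ((v, g) # w) = vertex_emb v g \<otimes>\<^bsub>GP\<^esub> cls w"
  by (simp add: vertex_emb_def mult_cls)

lemma vertex_emb_in_carrier: "v \<in> V \<Longrightarrow> g \<in> carrier (G v) \<Longrightarrow> vertex_emb v g \<in> carrier GP"
  by (simp add: vertex_emb_def cls_in_carrier)

lemma vertex_emb_mult:
  assumes "v \<in> V" "a \<in> carrier (G v)" "b \<in> carrier (G v)"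
  shows "vertex_emb v a \<otimes>\<^bsub>GP\<^esub> vertex_emb v b = vertex_emb v (a \<otimes>\<^bsub>G v\<^esub> b)"
  using assms eqv_merge equiv_class_eq[OF equiv_eqv] by (simp add: vertex_emb_def mult_cls)

lemma vertex_emb_one: "v \<in> V \<Longrightarrow> vertex_emb v \<one>\<^bsub>G v\<^esub> = \<one>\<^bsub>GP\<^esub>"
  using eqv_delete_one equiv_class_eq[OF equiv_eqv] by (simp add: vertex_emb_def one_graph_product)

lemma graph_product_induct [consumes 1, case_names one letter]:
  assumes "x \<in> carrier GP"
    and one: "P \<one>\<^bsub>GP\<^esub>"
    and letter: "\<And>v g x. v \<in> V \<Longrightarrow> g \<in> carrier (G v) \<Longrightarrow> x \<in> carrier GP \<Longrightarrow> P x
      \<Longrightarrow> P (vertex_emb v g \<otimes>\<^bsub>GP\<^esub> x)"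
  shows "P x"
proof -
  have "P (cls w)" if "w \<in> words" for w
    using that
  proof (induction w)
    case Nil
    then show ?case using one by (simp add: one_graph_product)
  next
    case (Cons a w)
    then obtain v g where "a = (v, g)" "v \<in> V" "g \<in> carrier (G v)" "w \<in> words"
      by (cases a) auto
    with Cons.IH show ?case by (simp add: cls_Cons letter cls_in_carrier)
  qed
  with assms(1) show ?thesis by (auto elim: carrier_graph_productE)
qed

lemma monoid_graph_product: "monoid GP"
proof (rule monoidI)
  fix A B C assume "A \<in> carrier GP" "B \<in> carrier GP" "C \<in> carrier GP"
  then show "A \<otimes>\<^bsub>GP\<^esub> B \<in> carrier GP"
    and "A \<otimes>\<^bsub>GP\<^esub> B \<otimes>\<^bsub>GP\<^esub> C = A \<otimes>\<^bsub>GP\<^esub> (B \<otimes>\<^bsub>GP\<^esub> C)"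
    by (auto elim!: carrier_graph_productE simp: mult_cls cls_in_carrier)
next
  fix A assume "A \<in> carrier GP"
  then show "\<one>\<^bsub>GP\<^esub> \<otimes>\<^bsub>GP\<^esub> A = A" and "A \<otimes>\<^bsub>GP\<^esub> \<one>\<^bsub>GP\<^esub> = A"
    by (auto elim!: carrier_graph_productE simp: mult_cls one_graph_product)
qed (simp add: one_graph_product cls_in_carrier)

lemma group_graph_product: "group GP"
proof (rule monoid.group_l_invI[OF monoid_graph_product])
  interpret monoid GP by (rule monoid_graph_product)
  fix x assume "x \<in> carrier GP"
  then show "\<exists>y \<in> carrier GP. y \<otimes>\<^bsub>GP\<^esub> x = \<one>\<^bsub>GP\<^esub>"
  proof (induction rule: graph_product_induct)
    case (letter v g x)
    then obtain y where y: "y \<in> carrier GP" "y \<otimes>\<^bsub>GP\<^esub> x = \<one>\<^bsub>GP\<^esub>" by blast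
    interpret Gv: group "G v" using vertex_group letter(1) .
    have "(y \<otimes>\<^bsub>GP\<^esub> vertex_emb v (inv\<^bsub>G v\<^esub> g)) \<otimes>\<^bsub>GP\<^esub> (vertex_emb v g \<otimes>\<^bsub>GP\<^esub> x)
        = y \<otimes>\<^bsub>GP\<^esub> ((vertex_emb v (inv\<^bsub>G v\<^esub> g) \<otimes>\<^bsub>GP\<^esub> vertex_emb v g) \<otimes>\<^bsub>GP\<^esub> x)"
      using letter y by (simp add: m_assoc vertex_emb_in_carrier)
    also have "\<dots> = \<one>\<^bsub>GP\<^esub>"
      using letter y by (simp add: vertex_emb_mult vertex_emb_one)
    finally show ?case
      using letter y by (intro bexI[of _ "y \<otimes>\<^bsub>GP\<^esub> vertex_emb v (inv\<^bsub>G v\<^esub> g)"])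
        (auto simp: vertex_emb_in_carrier)
  qed (metis one_closed l_one)
qed

lemma vertex_emb_hom: "v \<in> V \<Longrightarrow> vertex_emb v \<in> hom (G v) GP"
  by (rule homI) (simp_all add: vertex_emb_in_carrier vertex_emb_mult)

lemma group_hom_vertex_emb: "v \<in> V \<Longrightarrow> group_hom (G v) GP (vertex_emb v)"
  by (simp add: group_hom_def group_hom_axioms_def vertex_group group_graph_product vertex_emb_hom)

lemma map_letters_words:
  assumes endo: "\<And>u. u \<in> V \<Longrightarrow> f u \<in> hom (G u) (G u)"
  shows "w \<in> words \<Longrightarrow> map_letters f w \<in> words"
  by (induction w) (auto simp: hom_in_carrier[OF endo])

lemma map_letters_gp_step:
  assumes endo: "\<And>u. u \<in> V \<Longrightarrow> f u \<in> hom (G u) (G u)"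
  shows "(x, y) \<in> gp_step V E G \<Longrightarrow> (map_letters f x, map_letters f y) \<in> gp_step V E G"
proof (induction rule: gp_step.induct)
  case (del_one xs ys v)
  have "f v \<one>\<^bsub>G v\<^esub> = \<one>\<^bsub>G v\<^esub>"
    using endo del_one.hyps(3) vertex_group by (simp add: group_hom_def group_hom_axioms_def
        group_hom.hom_one)
  with del_one show ?case
    using gp_step.del_one[of "map_letters f xs" V G "map_letters f ys" v E] map_letters_words[OF endo]
    by simp
next
  case (merge xs ys v a b)
  then show ?case
    using gp_step.merge[of "map_letters f xs" V G "map_letters f ys" v "f v a" "f v b" E]
      map_letters_words[OF endo]
    by (simp add: hom_mult[OF endo] hom_in_carrier[OF endo])
next
  case (swap xs ys u w a b)
  then show ?case
    using gp_step.swap[of "map_letters f xs" V G "map_letters f ys" u w E "f u a" "f w b"]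
      map_letters_words[OF endo]
    by (simp add: hom_in_carrier[OF endo])
qed

lemma map_letters_eqv:
  assumes endo: "\<And>u. u \<in> V \<Longrightarrow> f u \<in> hom (G u) (G u)" and xy: "(x, y) \<in> eqv"
  shows "(map_letters f x, map_letters f y) \<in> eqv"
proof -
  have "(map_letters f x, map_letters f y) \<in> moves\<^sup>*" if "(x, y) \<in> moves\<^sup>*"
    using that
  proof (induction rule: rtrancl_induct)
    case (step y y')
    then have "(map_letters f y, map_letters f y') \<in> moves"
      using map_letters_gp_step[OF endo] by blast
    with step.IH show ?case by (rule rtrancl_into_rtrancl)
  qed simp
  with xy show ?thesis by (simp add: eqv_iff map_letters_words[OF endo])
qed

definition graph_product_map :: "('v \<Rightarrow> 'g \<Rightarrow> 'g) \<Rightarrow> ('v \<times> 'g) list set \<Rightarrow> ('v \<times> 'g) list set" where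
  "graph_product_map f A = cls (map_letters f (SOME w. w \<in> A))"

lemma graph_product_map_cls:
  assumes endo: "\<And>u. u \<in> V \<Longrightarrow> f u \<in> hom (G u) (G u)" and w: "w \<in> words"
  shows "graph_product_map f (cls w) = cls (map_letters f w)"
  unfolding graph_product_map_def
  using map_letters_eqv[OF endo some_in_cls[OF w]] equiv_class_eq[OF equiv_eqv] by simp

lemma graph_product_map_hom:
  assumes endo: "\<And>u. u \<in> V \<Longrightarrow> f u \<in> hom (G u) (G u)"
  shows "graph_product_map f \<in> hom GP GP"
proof (rule homI)
  fix A B assume "A \<in> carrier GP" "B \<in> carrier GP"
  then show "graph_product_map f A \<in> carrier GP"
    and "graph_product_map f (A \<otimes>\<^bsub>GP\<^esub> B) = graph_product_map f A \<otimes>\<^bsub>GP\<^esub> graph_product_map f B"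
    by (auto elim!: carrier_graph_productE
        simp: graph_product_map_cls[OF endo] cls_in_carrier map_letters_words[OF endo] mult_cls)
qed

lemma graph_product_map_iso:
  assumes endo: "\<And>u. u \<in> V \<Longrightarrow> f u \<in> hom (G u) (G u)"
    and involutive: "\<And>u a. u \<in> V \<Longrightarrow> a \<in> carrier (G u) \<Longrightarrow> f u (f u a) = a"
  shows "graph_product_map f \<in> iso GP GP"
proof (rule isoI)
  show hom: "graph_product_map f \<in> hom GP GP"
    using endo by (rule graph_product_map_hom)
  have "map_letters f (map_letters f w) = w" if "w \<in> words" for w
    using that by (induction w) (auto simp: involutive)
  then have "graph_product_map f (graph_product_map f A) = A" if "A \<in> carrier GP" for A
    using that by (auto elim!: carrier_graph_productE
        simp: graph_product_map_cls[OF endo] map_letters_words[OF endo])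
  then show "bij_betw (graph_product_map f) (carrier GP) (carrier GP)"
    using hom_in_carrier[OF hom] by (intro bij_betw_byWitness[where f' = "graph_product_map f"]) auto
qed

definition invert_vertex :: "'v \<Rightarrow> 'v \<Rightarrow> 'g \<Rightarrow> 'g" where
  "invert_vertex v u a = (if u = v then inv\<^bsub>G u\<^esub> a else a)"

lemma invert_vertex_hom:
  assumes "comm_group (G v)" "u \<in> V"
  shows "invert_vertex v u \<in> hom (G u) (G u)"
proof (cases "u = v")
  case True
  interpret Gv: comm_group "G v" by (rule assms(1))
  show ?thesis by (rule homI) (simp_all add: True invert_vertex_def Gv.inv_mult)
next
  case False
  then show ?thesis by (simp add: invert_vertex_def hom_def)
qed

lemma graph_product_map_invert_vertex_iso:
  assumes "comm_group (G v)"
  shows "graph_product_map (invert_vertex v) \<in> iso GP GP"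
proof (rule graph_product_map_iso)
  show "invert_vertex v u \<in> hom (G u) (G u)" if "u \<in> V" for u
    using assms that by (rule invert_vertex_hom)
  show "invert_vertex v u (invert_vertex v u a) = a" if "u \<in> V" "a \<in> carrier (G u)" for u a
    using that by (cases "u = v") (simp_all add: invert_vertex_def group.inv_inv vertex_group)
qed

lemma square_in_aut_comm:
  assumes v: "v \<in> V" and comm: "comm_group (G v)" and h: "h \<in> carrier (G v)"
  shows "vertex_emb v (h \<otimes>\<^bsub>G v\<^esub> h) \<in> aut_comm GP"
proof -
  interpret Gv: group "G v" using vertex_group v .
  interpret emb: group_hom "G v" GP "vertex_emb v" using group_hom_vertex_emb v .
  let ?x = "vertex_emb v (inv\<^bsub>G v\<^esub> h)"
  have x: "?x \<in> carrier GP" using v h by (simp add: vertex_emb_in_carrier)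
  have "graph_product_map (invert_vertex v) ?x = vertex_emb v h"
    using v h graph_product_map_cls[OF invert_vertex_hom[OF comm], of "[(v, inv\<^bsub>G v\<^esub> h)]"]
    by (simp add: vertex_emb_def invert_vertex_def)
  moreover have "inv\<^bsub>GP\<^esub> ?x = vertex_emb v h"
    using h emb.hom_inv[OF h] emb.H.inv_inv[OF emb.hom_closed[OF h]] by simp
  ultimately have "graph_product_map (invert_vertex v) ?x \<otimes>\<^bsub>GP\<^esub> inv\<^bsub>GP\<^esub> ?x
      = vertex_emb v (h \<otimes>\<^bsub>G v\<^esub> h)"
    using h by simp
  with aut_comm_incl[OF graph_product_map_invert_vertex_iso[OF comm] x] show ?thesis
    by simp
qed

lemma generate_vertex_generators:
  assumes S: "\<And>v. v \<in> V \<Longrightarrow> S v \<subseteq> carrier (G v) \<and> generate (G v) (S v) = carrier (G v)"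
  shows "generate GP (\<Union>v\<in>V. vertex_emb v ` S v) = carrier GP"
proof
  interpret GP: group GP by (rule group_graph_product)
  have S_carrier: "(\<Union>v\<in>V. vertex_emb v ` S v) \<subseteq> carrier GP"
    using S vertex_emb_in_carrier by blast
  then show "generate GP (\<Union>v\<in>V. vertex_emb v ` S v) \<subseteq> carrier GP"
    by (rule GP.generate_incl)
  show "carrier GP \<subseteq> generate GP (\<Union>v\<in>V. vertex_emb v ` S v)"
  proof
    fix x assume "x \<in> carrier GP"
    then show "x \<in> generate GP (\<Union>v\<in>V. vertex_emb v ` S v)"
    proof (induction rule: graph_product_induct)
      case one
      then show ?case by (rule generate.one)
    next
      case (letter v g x)
      have "vertex_emb v g \<in> vertex_emb v ` generate (G v) (S v)"
        using S letter(1,2) by simp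
      also have "\<dots> = generate GP (vertex_emb v ` S v)"
        using group_hom.generate_img[OF group_hom_vertex_emb[OF letter(1)]] S letter(1) by simp
      also have "\<dots> \<subseteq> generate GP (\<Union>v\<in>V. vertex_emb v ` S v)"
        using letter(1) by (intro GP.mono_generate) blast
      finally show ?case using letter.IH by (rule generate.eng)
    qed
  qed
qed

lemma finite_rcosets_aut_comm:
  assumes "finite V"
    and comm: "\<And>v. v \<in> V \<Longrightarrow> comm_group (G v)"
    and fin_gen: "\<And>v. v \<in> V \<Longrightarrow> fin_gen_group (G v)"
  shows "finite (rcosets\<^bsub>GP\<^esub> aut_comm GP)"
proof -
  interpret GP: group GP by (rule group_graph_product)
  interpret normal "aut_comm GP" GP by (rule GP.aut_comm_normal)
  obtain S where S: "\<And>v. v \<in> V \<Longrightarrow> finite (S v) \<and> S v \<subseteq> carrier (G v)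
      \<and> generate (G v) (S v) = carrier (G v)"
    using fin_gen unfolding fin_gen_group_def by metis
  show ?thesis
  proof (rule finite_rcosets_of_square_generators)
    show "comm_group (GP Mod aut_comm GP)" by (rule GP.comm_group_Mod_aut_comm)
    show "finite (\<Union>v\<in>V. vertex_emb v ` S v)" using \<open>finite V\<close> S by blast
    show "(\<Union>v\<in>V. vertex_emb v ` S v) \<subseteq> carrier GP"
      using S vertex_emb_in_carrier by blast
    show "generate GP (\<Union>v\<in>V. vertex_emb v ` S v) = carrier GP"
      using S by (intro generate_vertex_generators) blast
    fix t assume "t \<in> (\<Union>v\<in>V. vertex_emb v ` S v)"
    then obtain v s where v: "v \<in> V" and s: "s \<in> carrier (G v)" and t: "t = vertex_emb v s"
      using S by blast
    show "t \<otimes>\<^bsub>GP\<^esub> t \<in> aut_comm GP"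
      using square_in_aut_comm[OF v comm[OF v] s] by (simp add: t vertex_emb_mult v s)
  qed
qed

lemma aut_comm_eq_carrier_if_odd_order:
  assumes comm: "\<And>v. v \<in> V \<Longrightarrow> comm_group (G v)"
    and odd: "\<And>v. v \<in> V \<Longrightarrow> odd (order (G v))"
  shows "aut_comm GP = carrier GP"
proof
  interpret GP: group GP by (rule group_graph_product)
  interpret AC: subgroup "aut_comm GP" GP by (rule GP.aut_comm_subgroup)
  show "aut_comm GP \<subseteq> carrier GP" by (rule AC.subset)
  show "carrier GP \<subseteq> aut_comm GP"
  proof
    fix x assume "x \<in> carrier GP"
    then show "x \<in> aut_comm GP"
    proof (induction rule: graph_product_induct)
      case (letter v g x)
      obtain h where "h \<in> carrier (G v)" "h \<otimes>\<^bsub>G v\<^esub> h = g"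
        using group.square_root_of_odd_order[OF vertex_group odd] letter(1,2) by blast
      then have "vertex_emb v g \<in> aut_comm GP"
        using square_in_aut_comm[OF letter(1) comm] letter(1) by blast
      then show ?case using letter.IH by (rule AC.m_closed)
    qed (rule AC.one_closed)
  qed
qed

end

theorem proposition8p3:
  fixes V :: "'v set" and E :: "'v set set" and G :: "'v \<Rightarrow> 'g monoid"
  assumes graph: "simple_graph V E"
    and ab: "\<And>v. v \<in> V \<Longrightarrow> comm_group (G v)"
    and fg: "\<And>v. v \<in> V \<Longrightarrow> fin_gen_group (G v)"
    and nontriv: "\<And>v. v \<in> V \<Longrightarrow> carrier (G v) \<noteq> {\<one>\<^bsub>G v\<^esub>}"
    and central_finite: "\<And>v. v \<in> V \<Longrightarrow> st E v = V \<Longrightarrow> finite (carrier (G v))"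
  shows "subgroup (aut_comm (graph_product V E G)) (graph_product V E G)
       \<and> finite (rcosets\<^bsub>graph_product V E G\<^esub> (aut_comm (graph_product V E G)))
       \<and> ((\<forall>v\<in>V. st E v \<noteq> V)
            \<and> (\<forall>v\<in>V. finite (carrier (G v)) \<and> odd (card (carrier (G v))))
          \<longrightarrow> aut_comm (graph_product V E G) = carrier (graph_product V E G))"
proof -
  interpret vertex_groups V E G
    using ab by (simp add: vertex_groups_def comm_group.axioms(2))
  have "finite V" using graph by (simp add: simple_graph_def)
  show ?thesis
    using group.aut_comm_subgroup[OF group_graph_product]
      finite_rcosets_aut_comm[OF \<open>finite V\<close> ab fg]
      aut_comm_eq_carrier_if_odd_order[OF ab]
    by (auto simp: order_def)
qed

end
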